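(* Let $n\ge1$, $\mathbb{R}^n_+=\{x\in\mathbb{R}^n:x_1>0\}$ and let $k\in\{1,\ldots,n\}$. Then for every $u\in C_0^\infty(\mathbb{R}^n_+)$, \[ \int_{\mathbb{R}^n_+}|\nabla u|^2dx\ \ge\ \int_{\mathbb{R}^n_+}\left(\frac{k^2}{4}\,\frac{1}{x_1^2+\cdots+x_k^2}+\sum_{m=k+1}^{n}\frac14\,\frac{1}{x_1^2+\cdots+x_m^2}\right)u^2dx, \] where the sum is empty when $k=n$. *)

theory Defs
  imports "HOL-Analysis.Analysis"
begin

text \<open>Points of R^n are modelled as vectors real^'n, where the index type 'n is finite
  and linearly ordered; its elements listed in increasing order are the coordinates 1..n
  (so n = CARD('n)).  coord x m is the m-th coordinate x_m (1-based).\<close>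

definition coord :: "real ^ ('n::{finite,linorder}) \<Rightarrow> nat \<Rightarrow> real" where
  "coord x m = x $ (sorted_list_of_set (UNIV :: 'n set) ! (m - 1))"

definition half_space :: "(real ^ ('n::{finite,linorder})) set" where
  "half_space = {x. coord x 1 > 0}"

definition partial :: "'n::finite \<Rightarrow> (real ^ 'n \<Rightarrow> real) \<Rightarrow> real ^ 'n \<Rightarrow> real" where
  "partial i f x = frechet_derivative f (at x) (axis i 1)"

fun pderivs :: "'n::finite list \<Rightarrow> (real ^ 'n \<Rightarrow> real) \<Rightarrow> real ^ 'n \<Rightarrow> real" where
  "pderivs [] f = f"
| "pderivs (i # is) f = partial i (pderivs is f)"

definition smooth :: "(real ^ 'n::finite \<Rightarrow> real) \<Rightarrow> bool" where
  "smooth f \<longleftrightarrow> (\<forall>is x. pderivs is f differentiable (at x))"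

text \<open>u \<in> C_0^\<infinity>(\<Omega>): smooth, with compact support contained in \<Omega>
  (identified with its extension by zero to all of R^n).\<close>
definition C0_infty :: "(real ^ 'n::finite) set \<Rightarrow> (real ^ 'n \<Rightarrow> real) set" where
  "C0_infty \<Omega> = {u. smooth u \<and> compact (closure {x. u x \<noteq> 0}) \<and> closure {x. u x \<noteq> 0} \<subseteq> \<Omega>}"

definition grad_sq :: "(real ^ 'n::finite \<Rightarrow> real) \<Rightarrow> real ^ 'n \<Rightarrow> real" where
  "grad_sq u x = (\<Sum>i\<in>UNIV. (partial i u x)^2)"

end

theory Submission
  imports Defs
begin

text \<open>For any vector field V on the half space, integrating 0 \<le> |\<nabla>u + u V|^2 and using
  that the integral of div (u^2 V) vanishes gives
  \<integral> |\<nabla>u|^2 \<ge> \<integral> (div V - |V|^2) u^2.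
  With P_m x = (x_1, \<dots>, x_m, 0, \<dots>), the field
  V = -e_1/x_1 + \<Sum>_{m \<ge> k} c_m P_m x / |P_m x|^2 has
  div V - |V|^2 = \<Sum>_m c_m (m - c_m - 2 \<Sum>_{l < m} c_l) / |P_m x|^2
  (the 1/x_1^2 terms cancel). Choosing each c_m to maximise its own term, c_k = k/2 and
  c_m = 1/2 for m > k, makes the m-th term c_m^2 / |P_m x|^2, which is exactly the weight
  of the theorem.\<close>

lemma has_real_derivative_along_line:
  fixes f :: "'a::real_normed_vector \<Rightarrow> real"
  assumes "f differentiable (at (x + s *\<^sub>R v))"
  shows "((\<lambda>t. f (x + t *\<^sub>R v)) has_real_derivative frechet_derivative f (at (x + s *\<^sub>R v)) v) (at s)"
proof -
  let ?F = "frechet_derivative f (at (x + s *\<^sub>R v))"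
  have F: "(f has_derivative ?F) (at (x + s *\<^sub>R v))"
    using assms frechet_derivative_works by blast
  have "((\<lambda>t. x + t *\<^sub>R v) has_derivative (\<lambda>t. t *\<^sub>R v)) (at s)"
    by (auto intro!: derivative_eq_intros)
  from diff_chain_at[OF this F]
  have "((\<lambda>t. f (x + t *\<^sub>R v)) has_derivative (\<lambda>t. ?F (t *\<^sub>R v))) (at s)"
    by (simp add: o_def)
  moreover have "(\<lambda>t. ?F (t *\<^sub>R v)) = (*) (?F v)"
    using linear_scale[OF has_derivative_linear[OF F]] by (auto simp: fun_eq_iff mult.commute)
  ultimately show ?thesis
    unfolding has_field_derivative_def by (simp only:)
qed

lemma partial_eqI:
  fixes f :: "real ^ 'n::finite \<Rightarrow> real"
  assumes "f differentiable (at x)"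
    and "((\<lambda>t. f (x + t *\<^sub>R axis i 1)) has_real_derivative D) (at 0)"
  shows "partial i f x = D"
  using has_real_derivative_along_line[of f x 0 "axis i 1"] assms DERIV_unique
  unfolding partial_def by auto

lemma partial_has_derivative:
  fixes f :: "real ^ 'n::finite \<Rightarrow> real"
  shows "(f has_derivative f') (at x) \<Longrightarrow> partial i f x = f' (axis i 1)"
  unfolding partial_def by (simp add: frechet_derivative_at[symmetric])

lemma partial_mult:
  fixes f g :: "real ^ 'n::finite \<Rightarrow> real"
  assumes "f differentiable (at x)" "g differentiable (at x)"
  shows "partial i (\<lambda>y. f y * g y) x = partial i f x * g x + f x * partial i g x"
proof -
  have "((\<lambda>y. f y * g y) has_derivative
      (\<lambda>h. f x * frechet_derivative g (at x) h + frechet_derivative f (at x) h * g x)) (at x)"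
    using assms by (intro has_derivative_mult) (auto simp: frechet_derivative_works[symmetric])
  from partial_has_derivative[OF this] show ?thesis
    by (simp add: partial_def)
qed

lemma has_derivative_zero_if_vanishes_near:
  assumes "open T" "x \<in> T" "\<And>y. y \<in> T \<Longrightarrow> f y = 0"
  shows "(f has_derivative (\<lambda>_. 0)) (at x)"
  by (rule has_derivative_transform_within_open[OF has_derivative_const assms(1,2)])
     (use assms(3) in auto)

lemma C0_infty_differentiable:
  assumes "u \<in> C0_infty H"
  shows "u differentiable (at x)" "partial i u differentiable (at x)"
proof -
  have "pderivs [] u differentiable (at x)" "pderivs [i] u differentiable (at x)"
    using assms unfolding C0_infty_def smooth_def by blast+
  then show "u differentiable (at x)" "partial i u differentiable (at x)" by simp_all
qed

lemma C0_infty_continuous_on: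
  assumes "u \<in> C0_infty H"
  shows "continuous_on S u" "continuous_on S (partial i u)"
  using C0_infty_differentiable[OF assms]
  by (auto intro!: continuous_at_imp_continuous_on differentiable_imp_continuous_within)

lemma continuous_on_glue_vanishing:
  assumes "open H" "closed C" "C \<subseteq> H" "continuous_on H f" "\<And>x. x \<notin> C \<Longrightarrow> f x = 0"
  shows "continuous_on UNIV f"
proof -
  have "continuous_on (-C) f"
    using continuous_on_cong[of "-C" "-C" f "\<lambda>_. 0"] assms(5) by (simp add: continuous_on_const)
  moreover have "H \<union> -C = UNIV" using assms(3) by blast
  ultimately show ?thesis
    using continuous_on_open_Un[OF assms(1) _ assms(4)] assms(2) by (metis open_Compl)
qed

lemma integrable_on_UNIV_compact_support:
  fixes f :: "'a::euclidean_space \<Rightarrow> 'b::banach"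
  assumes "continuous_on UNIV f" "compact K" "\<And>x. x \<notin> K \<Longrightarrow> f x = 0"
  shows "f integrable_on UNIV"
proof -
  obtain a where "K \<subseteq> cbox (-a) a"
    using bounded_subset_cbox_symmetric[OF compact_imp_bounded[OF assms(2)]] by blast
  moreover have "f integrable_on cbox (-a) a"
    by (rule integrable_continuous, rule continuous_on_subset[OF assms(1)]) auto
  ultimately show ?thesis
    using integrable_on_superset[of f "cbox (-a) a" UNIV] assms(3) by blast
qed

lemma has_integral_integral_UNIV_on:
  fixes f :: "'a::euclidean_space \<Rightarrow> 'b::banach"
  assumes "f integrable_on UNIV" "\<And>x. x \<notin> S \<Longrightarrow> f x = 0"
  shows "(f has_integral integral UNIV f) S"
proof -
  have "(\<lambda>x. if x \<in> S then f x else 0) = f" using assms(2) by auto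
  then show ?thesis
    using has_integral_restrict_UNIV[of S f] assms(1) by (metis integrable_integral)
qed

lemma has_integral_translate_compact_support:
  fixes g :: "'a::euclidean_space \<Rightarrow> 'b::banach"
  assumes "continuous_on UNIV g" "compact K" "\<And>x. x \<notin> K \<Longrightarrow> g x = 0"
  shows "((\<lambda>y. g (y + c)) has_integral integral UNIV g) UNIV"
proof -
  obtain a where a: "K \<subseteq> cbox (-a) a"
    using bounded_subset_cbox_symmetric[OF compact_imp_bounded[OF assms(2)]] by blast
  define I where "I = integral (cbox (-a) a) g"
  have box: "(g has_integral I) (cbox (-a) a)"
    unfolding I_def
    by (rule integrable_integral, rule integrable_continuous, rule continuous_on_subset[OF assms(1)]) auto
  then have "(g has_integral I) UNIV"
    by (rule has_integral_on_superset) (use a assms(3) in auto)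
  then have "integral UNIV g = I" by (rule integral_unique)
  moreover have "((\<lambda>y. g (y + c)) has_integral I) (cbox (-a - c) (a - c))"
    using has_integral_shift_cbox[OF box] .
  then have "((\<lambda>y. g (y + c)) has_integral I) UNIV"
  proof (rule has_integral_on_superset)
    fix y assume "y \<notin> cbox (-a - c) (a - c)"
    then have "y + c \<notin> cbox (-a) a"
      by (auto simp: mem_box inner_diff_left inner_add_left algebra_simps)
    then show "g (y + c) = 0" using a assms(3) by blast
  qed auto
  ultimately show ?thesis by simp
qed

lemma has_field_derivative_integral_translate:
  fixes g :: "real ^ 'n::finite \<Rightarrow> real"
  assumes diff: "\<And>x. g differentiable (at x)" and cont: "continuous_on UNIV (partial i g)"
  shows "((\<lambda>s. integral (cbox a b) (\<lambda>y. g (y + s *\<^sub>R axis i 1)))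
           has_field_derivative integral (cbox a b) (partial i g)) (at 0)"
proof -
  define e where "e = axis i (1::real)"
  define U where "U = {-1<..<1::real}"
  have cont_g: "continuous_on UNIV g"
    using diff by (simp add: differentiable_at_imp_differentiable_on differentiable_imp_continuous_on)
  have "((\<lambda>s. integral (cbox a b) (\<lambda>y. g (y + s *\<^sub>R e)))
      has_field_derivative integral (cbox a b) (\<lambda>y. partial i g (y + 0 *\<^sub>R e))) (at 0 within U)"
  proof (rule leibniz_rule_field_derivative)
    fix s y assume "s \<in> U"
    show "((\<lambda>s. g (y + s *\<^sub>R e)) has_field_derivative partial i g (y + s *\<^sub>R e)) (at s within U)"
      using has_real_derivative_along_line[of g y s e] diff
      unfolding partial_def e_def by (auto intro: has_field_derivative_at_within)
    show "(\<lambda>y. g (y + s *\<^sub>R e)) integrable_on cbox a b"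
      by (rule integrable_continuous, rule continuous_on_compose2[OF cont_g])
        (auto intro!: continuous_intros)
  next
    show "continuous_on (U \<times> cbox a b) (\<lambda>(s, y). partial i g (y + s *\<^sub>R e))"
      unfolding case_prod_beta
      by (rule continuous_on_compose2[OF cont]) (auto intro!: continuous_intros)
  qed (auto simp: U_def)
  then show ?thesis
    using at_within_open[of 0 U] unfolding e_def by (simp add: U_def)
qed

lemma partial_has_integral_0:
  fixes g :: "real ^ 'n::finite \<Rightarrow> real"
  assumes diff: "\<And>x. g differentiable (at x)" and cont: "continuous_on UNIV (partial i g)"
    and K: "compact K" and supp: "\<And>x. x \<notin> K \<Longrightarrow> g x = 0"
  shows "(partial i g has_integral 0) UNIV"
proof -
  define e where "e = axis i (1::real)"
  have cont_g: "continuous_on UNIV g"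
    using diff by (simp add: differentiable_at_imp_differentiable_on differentiable_imp_continuous_on)
  obtain \<rho> where "K \<subseteq> ball 0 \<rho>"
    using bounded_subset_ballD[OF compact_imp_bounded[OF K]] by blast
  obtain a where a: "cball (0::real^'n) (\<rho> + 1) \<subseteq> cbox (-a) a"
    using bounded_subset_cbox_symmetric[OF bounded_cball] by blast
  define B where "B = cbox (-a) a"
  have KB: "K \<subseteq> B" using \<open>K \<subseteq> ball 0 \<rho>\<close> a unfolding B_def by fastforce
  have shift_vanishes: "g (y + s *\<^sub>R e) = 0" if "\<bar>s\<bar> \<le> 1" "y \<notin> B" for s y
  proof (rule ccontr)
    assume "g (y + s *\<^sub>R e) \<noteq> 0"
    then have "norm (y + s *\<^sub>R e) < \<rho>" using supp \<open>K \<subseteq> ball 0 \<rho>\<close> by fastforce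
    moreover have "norm y \<le> norm (y + s *\<^sub>R e) + \<bar>s\<bar>"
      using norm_triangle_ineq4[of "y + s *\<^sub>R e" "s *\<^sub>R e"] by (simp add: e_def)
    ultimately have "y \<in> cball 0 (\<rho> + 1)" using that(1) by simp
    then have "y \<in> B" using a unfolding B_def by blast
    then show False using that(2) by blast
  qed
  text \<open>For |s| < 1 the translates of g by s e all have integral over B equal to the integral
    of g, so the derivative in s, which is the integral of partial i g over B, vanishes.\<close>
  define U where "U = {-1<..<1::real}"
  have "integral B (\<lambda>y. g (y + s *\<^sub>R e)) = integral UNIV g" if "s \<in> U" for s
  proof -
    have shifted: "((\<lambda>y. g (y + s *\<^sub>R e)) has_integral integral UNIV g) UNIV"
      by (rule has_integral_translate_compact_support[OF cont_g K supp])
    have "((\<lambda>y. g (y + s *\<^sub>R e)) has_integral integral UNIV (\<lambda>y. g (y + s *\<^sub>R e))) B"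
      by (rule has_integral_integral_UNIV_on[OF has_integral_integrable[OF shifted]])
        (use shift_vanishes that in \<open>auto simp: U_def\<close>)
    then show ?thesis using integral_unique[OF shifted] by (simp add: integral_unique)
  qed
  then have "((\<lambda>s. integral B (\<lambda>y. g (y + s *\<^sub>R e))) has_field_derivative 0) (at 0)"
    by (intro has_field_derivative_transform_within_open[OF DERIV_const, of U]) (auto simp: U_def)
  moreover have "((\<lambda>s. integral B (\<lambda>y. g (y + s *\<^sub>R e))) has_field_derivative integral B (partial i g)) (at 0)"
    unfolding B_def e_def by (rule has_field_derivative_integral_translate[OF diff cont])
  ultimately have "integral B (partial i g) = 0" using DERIV_unique by blast
  moreover have "partial i g integrable_on B"
    unfolding B_def by (rule integrable_continuous, rule continuous_on_subset[OF cont]) auto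
  moreover have "partial i g x = 0" if "x \<notin> K" for x
    using has_derivative_zero_if_vanishes_near[of "-K" x g] that K supp
    by (simp add: compact_imp_closed open_Compl partial_has_derivative)
  ultimately show ?thesis
    using has_integral_on_superset[of "partial i g" 0 B UNIV] KB integrable_integral by fastforce
qed

definition divergence :: "('n::finite \<Rightarrow> real ^ 'n \<Rightarrow> real) \<Rightarrow> real ^ 'n \<Rightarrow> real" where
  "divergence V x = (\<Sum>i\<in>UNIV. partial i (V i) x)"

lemma divergence_has_integral_0:
  fixes G :: "'n::finite \<Rightarrow> real ^ 'n \<Rightarrow> real"
  assumes "\<And>i x. G i differentiable (at x)" "\<And>i. continuous_on UNIV (partial i (G i))"
    and "compact K" "\<And>i x. x \<notin> K \<Longrightarrow> G i x = 0"
  shows "(divergence G has_integral 0) UNIV"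
  using has_integral_sum[of UNIV "\<lambda>i. partial i (G i)" "\<lambda>_. 0" UNIV]
    partial_has_integral_0[OF assms(1,2,3,4)]
  unfolding divergence_def by (simp add: fun_eq_iff)

lemma partial_mult_sq:
  fixes f u :: "real ^ 'n::finite \<Rightarrow> real"
  assumes "f differentiable (at x)" "u differentiable (at x)"
  shows "partial i (\<lambda>y. f y * (u y)^2) x = partial i f x * (u x)^2 + 2 * f x * u x * partial i u x"
  using partial_mult[OF assms(1) differentiable_mult[OF assms(2,2)]] partial_mult[OF assms(2,2)]
  by (simp add: power2_eq_square algebra_simps)

lemma C0_infty_support:
  assumes "u \<in> C0_infty H"
  obtains C where "compact C" "C \<subseteq> H" "\<And>x. x \<notin> C \<Longrightarrow> u x = 0"
    "\<And>i x. x \<notin> C \<Longrightarrow> partial i u x = 0"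
proof
  let ?C = "closure {x. u x \<noteq> 0}"
  show "compact ?C" "?C \<subseteq> H" using assms unfolding C0_infty_def by auto
  show u_outside: "u x = 0" if "x \<notin> ?C" for x
    using that closure_subset[of "{x. u x \<noteq> 0}"] by auto
  show "partial i u x = 0" if "x \<notin> ?C" for i x
  proof -
    have "open (-?C)" "x \<in> -?C" using that by auto
    then have "(u has_derivative (\<lambda>_. 0)) (at x)"
      by (rule has_derivative_zero_if_vanishes_near) (use u_outside in blast)
    from partial_has_derivative[OF this] show ?thesis by simp
  qed
qed

lemma integrable_on_open_compact_support:
  fixes f :: "'a::euclidean_space \<Rightarrow> 'b::banach"
  assumes "open H" "compact C" "C \<subseteq> H" "continuous_on H f" "\<And>x. x \<notin> C \<Longrightarrow> f x = 0"
  shows "f integrable_on H"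
proof -
  have "f integrable_on UNIV"
    by (rule integrable_on_UNIV_compact_support[OF _ assms(2,5)],
        rule continuous_on_glue_vanishing[OF assms(1) compact_imp_closed[OF assms(2)] assms(3-5)])
  then show ?thesis
    using has_integral_integral_UNIV_on[of f H] assms(3,5) by blast
qed

lemma divergence_mult_sq_has_integral_0:
  fixes u :: "real ^ 'n::finite \<Rightarrow> real" and V :: "'n \<Rightarrow> real ^ 'n \<Rightarrow> real"
  assumes "open H" "u \<in> C0_infty H"
    and V_diff: "\<And>i x. x \<in> H \<Longrightarrow> V i differentiable (at x)"
    and V_partial_cont: "\<And>i. continuous_on H (partial i (V i))"
  shows "(divergence (\<lambda>i y. V i y * (u y)^2) has_integral 0) H"
proof -
  obtain C where C: "compact C" "C \<subseteq> H" and u_outside: "\<And>x. x \<notin> C \<Longrightarrow> u x = 0"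
    and "\<And>i x. x \<notin> C \<Longrightarrow> partial i u x = 0"
    by (rule C0_infty_support[OF assms(2)]) blast
  note u_diff = C0_infty_differentiable[OF assms(2)]
  note u_cont = C0_infty_continuous_on[OF assms(2)]
  have V_cont: "continuous_on H (V i)" for i
    using V_diff by (auto intro!: continuous_at_imp_continuous_on differentiable_imp_continuous_within)
  define G where "G i y = V i y * (u y)^2" for i y
  have G_outside: "(G i has_derivative (\<lambda>_. 0)) (at x)" if "x \<notin> C" for i x
    using has_derivative_zero_if_vanishes_near[of "-C" x "G i"] that u_outside
      compact_imp_closed[OF C(1)] unfolding G_def by auto
  then have G_partial_outside: "partial i (G i) x = 0" if "x \<notin> C" for i x
    using partial_has_derivative that by fastforce
  have G_diff: "G i differentiable (at x)" for i x
  proof (cases "x \<in> H")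
    case True
    then show ?thesis unfolding G_def using V_diff u_diff(1) by simp
  next
    case False
    then show ?thesis using G_outside C(2) differentiable_def by blast
  qed
  have G_cont: "continuous_on UNIV (partial i (G i))" for i
  proof (rule continuous_on_glue_vanishing[OF \<open>open H\<close> compact_imp_closed[OF C(1)] C(2)])
    show "continuous_on H (partial i (G i))"
      unfolding G_def using V_diff u_diff
      by (subst continuous_on_cong[OF refl partial_mult_sq])
        (auto intro!: continuous_intros V_partial_cont V_cont u_cont)
  qed (rule G_partial_outside)
  have "G i x = 0" if "x \<notin> C" for i x using u_outside[OF that] by (simp add: G_def)
  then have G_int: "(divergence G has_integral 0) UNIV"
    by (rule divergence_has_integral_0[OF G_diff G_cont C(1)])
  moreover have "divergence G x = 0" if "x \<notin> H" for x
  proof -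
    have "x \<notin> C" using that C(2) by auto
    then show ?thesis unfolding divergence_def by (simp add: G_partial_outside)
  qed
  ultimately have "(divergence G has_integral integral UNIV (divergence G)) H"
    by (intro has_integral_integral_UNIV_on has_integral_integrable)
  then show ?thesis using integral_unique[OF G_int] unfolding G_def by simp
qed

lemma grad_sq_integral_ge_vector_field:
  fixes u :: "real ^ 'n::finite \<Rightarrow> real" and V :: "'n \<Rightarrow> real ^ 'n \<Rightarrow> real"
  assumes "open H" "u \<in> C0_infty H"
    and V_diff: "\<And>i x. x \<in> H \<Longrightarrow> V i differentiable (at x)"
    and V_partial_cont: "\<And>i. continuous_on H (partial i (V i))"
  shows "integral H (\<lambda>x. (divergence V x - (\<Sum>i\<in>UNIV. (V i x)^2)) * (u x)^2)
           \<le> integral H (grad_sq u)"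
proof -
  obtain C where C: "compact C" "C \<subseteq> H" and u_outside: "\<And>x. x \<notin> C \<Longrightarrow> u x = 0"
    and du_outside: "\<And>i x. x \<notin> C \<Longrightarrow> partial i u x = 0"
    by (rule C0_infty_support[OF assms(2)]) blast
  note u_diff = C0_infty_differentiable[OF assms(2)]
  note u_cont = C0_infty_continuous_on[OF assms(2)]
  have V_cont: "continuous_on H (V i)" for i
    using V_diff by (auto intro!: continuous_at_imp_continuous_on differentiable_imp_continuous_within)
  define W where "W x = (divergence V x - (\<Sum>i\<in>UNIV. (V i x)^2)) * (u x)^2" for x
  define D where "D = divergence (\<lambda>i y. V i y * (u y)^2)"
  have D_int: "(D has_integral 0) H"
    unfolding D_def by (rule divergence_mult_sq_has_integral_0[OF assms])
  have "continuous_on H (divergence V)"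
    unfolding divergence_def by (intro continuous_intros V_partial_cont)
  then have W_int: "W integrable_on H"
    by (intro integrable_on_open_compact_support[OF \<open>open H\<close> C])
      (auto simp: W_def u_outside intro!: continuous_intros V_cont u_cont)
  have grad_int: "grad_sq u integrable_on H"
    by (intro integrable_on_open_compact_support[OF \<open>open H\<close> C])
      (auto simp: grad_sq_def du_outside intro!: continuous_intros u_cont)
  have "W x - D x \<le> grad_sq u x" if "x \<in> H" for x
  proof -
    have "grad_sq u x - W x + D x = (\<Sum>i\<in>UNIV. (partial i u x + V i x * u x)^2)"
      unfolding grad_sq_def W_def D_def divergence_def partial_mult_sq[OF V_diff[OF that] u_diff(1)]
        sum_distrib_right sum_subtractf[symmetric] sum.distrib[symmetric]
      by (intro sum.cong) (auto simp: power2_eq_square algebra_simps)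
    moreover have "(\<Sum>i\<in>UNIV. (partial i u x + V i x * u x)^2) \<ge> 0" by (rule sum_nonneg) simp
    ultimately show ?thesis by linarith
  qed
  then have "integral H (\<lambda>x. W x - D x) \<le> integral H (grad_sq u)"
    using W_int D_int grad_int
    by (intro integral_le) (auto intro!: integrable_diff simp: has_integral_integrable)
  moreover have "integral H (\<lambda>x. W x - D x) = integral H W"
    using integral_diff[of W H D] W_int D_int by (simp add: has_integral_integrable integral_unique)
  ultimately show ?thesis unfolding W_def by simp
qed

definition prefix_norm2 :: "(nat \<Rightarrow> real) \<Rightarrow> nat \<Rightarrow> real" where
  "prefix_norm2 xs m = (\<Sum>p<m. (xs p)^2)"

lemma prefix_norm2_pos: "xs 0 \<noteq> 0 \<Longrightarrow> 0 < m \<Longrightarrow> prefix_norm2 xs m > 0"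
  unfolding prefix_norm2_def by (rule sum_pos2[of _ 0]) auto

lemma prefix_norm2_shift:
  "prefix_norm2 (\<lambda>p. xs p + t * of_bool (p = q)) m
     = prefix_norm2 xs m + of_bool (q < m) * (2 * t * xs q + t^2)"
proof -
  have "prefix_norm2 (\<lambda>p. xs p + t * of_bool (p = q)) m
      = (\<Sum>p<m. (xs p)^2 + (if p = q then 2 * t * xs q + t^2 else 0))"
    unfolding prefix_norm2_def by (rule sum.cong) (auto simp: power2_eq_square algebra_simps)
  then show ?thesis by (simp add: sum.distrib prefix_norm2_def)
qed

lemma sum_of_bool_less:
  fixes c N :: nat
  shows "c \<le> N \<Longrightarrow> (\<Sum>q<N. of_bool (q < c) * (f q :: real)) = (\<Sum>q<c. f q)"
proof -
  assume "c \<le> N"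
  then have "(\<Sum>q<N. of_bool (q < c) * f q) = (\<Sum>q<c. of_bool (q < c) * f q)"
    by (intro sum.mono_neutral_right) auto
  then show ?thesis by simp
qed

lemma sum_of_bool_eq_0:
  fixes N :: nat
  shows "0 < N \<Longrightarrow> (\<Sum>q<N. of_bool (q = 0) * (f q :: real)) = f 0"
proof -
  assume "0 < N"
  then have "(\<Sum>q<N. of_bool (q = 0) * f q) = (\<Sum>q\<in>{0}. of_bool (q = 0) * f q)"
    by (intro sum.mono_neutral_right) auto
  then show ?thesis by simp
qed

lemma sum_sum_min_symmetric:
  fixes R c :: "nat \<Rightarrow> real"
  assumes "finite M" "\<And>l. l \<in> M \<Longrightarrow> R l \<noteq> 0"
  shows "(\<Sum>m\<in>M. \<Sum>l\<in>M. c m * c l * R (min m l) / (R m * R l))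
       = (\<Sum>m\<in>M. c m / R m * (c m + 2 * (\<Sum>l\<in>{l\<in>M. l < m}. c l)))"
  using assms
proof (induction M rule: finite_linorder_max_induct)
  case (insert b M)
  let ?f = "\<lambda>m l. c m * c l * R (min m l) / (R m * R l)"
  have "R b \<noteq> 0" using insert.prems by auto
  have "b \<notin> M" using insert.hyps by auto
  have row: "(\<Sum>l\<in>M. ?f b l) = (\<Sum>l\<in>M. c b * c l / R b)"
    and column: "(\<Sum>m\<in>M. ?f m b) = (\<Sum>l\<in>M. c b * c l / R b)"
    using insert by (auto intro!: sum.cong simp: min_def)
  have below_b: "{l \<in> insert b M. l < b} = M"
    and below_m: "\<And>m. m \<in> M \<Longrightarrow> {l \<in> insert b M. l < m} = {l \<in> M. l < m}"
    using insert.hyps by auto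
  have "(\<Sum>m\<in>insert b M. \<Sum>l\<in>insert b M. ?f m l)
      = ?f b b + (\<Sum>l\<in>M. ?f b l) + (\<Sum>m\<in>M. ?f m b) + (\<Sum>m\<in>M. \<Sum>l\<in>M. ?f m l)"
    using insert.hyps \<open>b \<notin> M\<close> by (simp add: sum.distrib)
  also have "\<dots> = ?f b b + 2 * (\<Sum>l\<in>M. c b * c l / R b) + (\<Sum>m\<in>M. \<Sum>l\<in>M. ?f m l)"
    unfolding row column by simp
  also have "\<dots> = c b / R b * (c b + 2 * (\<Sum>l\<in>M. c l))
      + (\<Sum>m\<in>M. c m / R m * (c m + 2 * (\<Sum>l\<in>{l\<in>M. l < m}. c l)))"
  proof -
    have "(\<Sum>l\<in>M. c b * c l / R b) = c b / R b * (\<Sum>l\<in>M. c l)"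
      by (simp add: sum_distrib_left)
    then show ?thesis using insert \<open>R b \<noteq> 0\<close> by (simp add: field_simps)
  qed
  also have "\<dots> = (\<Sum>m\<in>insert b M. c m / R m * (c m + 2 * (\<Sum>l\<in>{l\<in>insert b M. l < m}. c l)))"
    unfolding sum.insert[OF \<open>finite M\<close> \<open>b \<notin> M\<close>] below_b
    by (simp only: below_m cong: sum.cong)
  finally show ?case .
qed simp

text \<open>A point is represented by its coordinate sequence xs, indexed from 0 (so xs 0 is x_1),
  and prefix_norm2 xs m = |P_m x|^2. hardy_field M c xs q is the q-th component of V, and
  hardy_field_deriv M c xs q its partial derivative in the q-th direction.\<close>

definition hardy_field :: "nat set \<Rightarrow> (nat \<Rightarrow> real) \<Rightarrow> (nat \<Rightarrow> real) \<Rightarrow> nat \<Rightarrow> real" where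
  "hardy_field M c xs q = - of_bool (q = 0) / xs 0
     + (\<Sum>m\<in>M. c m * of_bool (q < m) * xs q / prefix_norm2 xs m)"

definition hardy_field_deriv :: "nat set \<Rightarrow> (nat \<Rightarrow> real) \<Rightarrow> (nat \<Rightarrow> real) \<Rightarrow> nat \<Rightarrow> real" where
  "hardy_field_deriv M c xs q = of_bool (q = 0) / (xs 0)^2
     + (\<Sum>m\<in>M. c m * of_bool (q < m)
          * (1 / prefix_norm2 xs m - 2 * (xs q)^2 / (prefix_norm2 xs m)^2))"

lemma sum_hardy_field_deriv:
  fixes N :: nat
  assumes "M \<subseteq> {1..N}" "0 < N" "xs 0 \<noteq> 0"
  shows "(\<Sum>q<N. hardy_field_deriv M c xs q)
     = 1 / (xs 0)^2 + (\<Sum>m\<in>M. c m * (real m - 2) / prefix_norm2 xs m)"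
proof -
  have "(\<Sum>q<N. of_bool (q = 0) / (xs 0)^2) = 1 / (xs 0)^2"
    using sum_of_bool_eq_0[OF \<open>0 < N\<close>, of "\<lambda>_. 1 / (xs 0)^2"] by simp
  moreover have "(\<Sum>q<N. c m * of_bool (q < m)
          * (1 / prefix_norm2 xs m - 2 * (xs q)^2 / (prefix_norm2 xs m)^2))
      = c m * (real m - 2) / prefix_norm2 xs m" if "m \<in> M" for m
  proof -
    have R: "prefix_norm2 xs m > 0"
      using that assms(1) by (intro prefix_norm2_pos[of xs, OF assms(3)]) auto
    let ?g = "\<lambda>q. 1 / prefix_norm2 xs m - 2 / (prefix_norm2 xs m)^2 * (xs q)^2"
    have "(\<Sum>q<N. c m * of_bool (q < m)
          * (1 / prefix_norm2 xs m - 2 * (xs q)^2 / (prefix_norm2 xs m)^2))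
        = (\<Sum>q<N. of_bool (q < m) * (c m * ?g q))"
      by (intro sum.cong) auto
    also have "\<dots> = c m * (\<Sum>q<m. ?g q)"
      using that assms(1) by (subst sum_of_bool_less) (auto simp: sum_distrib_left)
    also have "\<dots> = c m * (real m / prefix_norm2 xs m - 2 / (prefix_norm2 xs m)^2 * prefix_norm2 xs m)"
      by (simp only: sum_subtractf sum_distrib_left[symmetric] prefix_norm2_def) simp
    also have "\<dots> = c m * (real m / prefix_norm2 xs m - 2 / prefix_norm2 xs m)"
      using R by (simp add: power2_eq_square)
    finally show ?thesis by (simp add: diff_divide_distrib right_diff_distrib)
  qed
  ultimately show ?thesis
    unfolding hardy_field_deriv_def sum.distrib by (subst sum.swap) simp
qed

lemma sum_sq_sum_prefix_quotients:
  fixes N :: nat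
  assumes "M \<subseteq> {..N}"
  shows "(\<Sum>q<N. (\<Sum>m\<in>M. c m * of_bool (q < m) * xs q / prefix_norm2 xs m)^2)
     = (\<Sum>m\<in>M. \<Sum>l\<in>M. c m * c l * prefix_norm2 xs (min m l)
                            / (prefix_norm2 xs m * prefix_norm2 xs l))"
proof -
  let ?R = "prefix_norm2 xs"
  have "(\<Sum>q<N. (\<Sum>m\<in>M. c m * of_bool (q < m) * xs q / ?R m)^2)
      = (\<Sum>m\<in>M. \<Sum>l\<in>M. \<Sum>q<N. of_bool (q < min m l) * (c m * c l / (?R m * ?R l) * (xs q)^2))"
    unfolding power2_eq_square sum_product
    by (subst sum.swap, rule sum.cong[OF refl], subst sum.swap, intro sum.cong) auto
  also have "\<dots> = (\<Sum>m\<in>M. \<Sum>l\<in>M. c m * c l / (?R m * ?R l) * ?R (min m l))"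
  proof (intro sum.cong refl)
    fix m l assume "m \<in> M" "l \<in> M"
    then have "min m l \<le> N" using assms by (auto simp: min.coboundedI1)
    then show "(\<Sum>q<N. of_bool (q < min m l) * (c m * c l / (?R m * ?R l) * (xs q)^2))
        = c m * c l / (?R m * ?R l) * ?R (min m l)"
      unfolding sum_of_bool_less[OF \<open>min m l \<le> N\<close>] prefix_norm2_def
      by (simp add: sum_distrib_left)
  qed
  finally show ?thesis by simp
qed

lemma sum_hardy_field_sq:
  fixes N :: nat
  assumes "M \<subseteq> {1..N}" "0 < N" "xs 0 \<noteq> 0"
  shows "(\<Sum>q<N. (hardy_field M c xs q)^2)
     = 1 / (xs 0)^2 - 2 * (\<Sum>m\<in>M. c m / prefix_norm2 xs m)
       + (\<Sum>m\<in>M. \<Sum>l\<in>M. c m * c l * prefix_norm2 xs (min m l)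
                              / (prefix_norm2 xs m * prefix_norm2 xs l))"
proof -
  let ?R = "prefix_norm2 xs"
  define S where "S q = (\<Sum>m\<in>M. c m * of_bool (q < m) * xs q / ?R m)" for q
  have M_pos: "0 < m" "m \<le> N" if "m \<in> M" for m using that assms(1) by auto
  have "(\<Sum>q<N. (of_bool (q = 0) / xs 0)^2) = (\<Sum>q<N. of_bool (q = 0) * (1 / (xs 0)^2))"
    by (intro sum.cong) (auto simp: power_divide)
  also have "\<dots> = 1 / (xs 0)^2"
    by (rule sum_of_bool_eq_0[OF \<open>0 < N\<close>])
  moreover have "(\<Sum>q<N. of_bool (q = 0) / xs 0 * S q) = (\<Sum>m\<in>M. c m / ?R m)"
  proof -
    have "(\<Sum>q<N. of_bool (q = 0) / xs 0 * S q) = S 0 / xs 0"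
      using sum_of_bool_eq_0[OF \<open>0 < N\<close>, of "\<lambda>q. S q / xs 0"] by simp
    also have "\<dots> = (\<Sum>m\<in>M. c m / ?R m)"
      unfolding S_def sum_divide_distrib using assms(3) M_pos by (intro sum.cong) auto
    finally show ?thesis .
  qed
  moreover have "(\<Sum>q<N. (S q)^2)
      = (\<Sum>m\<in>M. \<Sum>l\<in>M. c m * c l * ?R (min m l) / (?R m * ?R l))"
    unfolding S_def using assms(1) by (intro sum_sq_sum_prefix_quotients) auto
  moreover have "(\<Sum>q<N. (hardy_field M c xs q)^2)
      = (\<Sum>q<N. (of_bool (q = 0) / xs 0)^2) - 2 * (\<Sum>q<N. of_bool (q = 0) / xs 0 * S q)
        + (\<Sum>q<N. (S q)^2)"
    unfolding sum_distrib_left sum_subtractf[symmetric] sum.distrib[symmetric]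
    by (intro sum.cong) (simp_all add: hardy_field_def S_def power2_eq_square algebra_simps)
  ultimately show ?thesis by simp
qed

lemma hardy_field_div_minus_sq:
  fixes N :: nat
  assumes "M \<subseteq> {1..N}" "0 < N" "xs 0 \<noteq> 0"
  shows "(\<Sum>q<N. hardy_field_deriv M c xs q) - (\<Sum>q<N. (hardy_field M c xs q)^2)
     = (\<Sum>m\<in>M. c m / prefix_norm2 xs m * (real m - c m - 2 * (\<Sum>l\<in>{l\<in>M. l < m}. c l)))"
proof -
  let ?R = "prefix_norm2 xs" and ?below = "\<lambda>m. \<Sum>l\<in>{l\<in>M. l < m}. c l"
  have R: "?R m \<noteq> 0" if "m \<in> M" for m
    using prefix_norm2_pos[of xs m] assms(1,3) that by fastforce
  have "finite M" using assms(1) finite_subset by blast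
  have "(\<Sum>q<N. hardy_field_deriv M c xs q) - (\<Sum>q<N. (hardy_field M c xs q)^2)
      = (\<Sum>m\<in>M. c m * (real m - 2) / ?R m) + 2 * (\<Sum>m\<in>M. c m / ?R m)
        - (\<Sum>m\<in>M. c m / ?R m * (c m + 2 * ?below m))"
    unfolding sum_hardy_field_deriv[of M N xs, OF assms] sum_hardy_field_sq[of M N xs, OF assms]
    using sum_sum_min_symmetric[OF \<open>finite M\<close> R] by simp
  also have "\<dots> = (\<Sum>m\<in>M. c m / ?R m * (real m - c m - 2 * ?below m))"
    unfolding sum_distrib_left sum.distrib[symmetric] sum_subtractf[symmetric]
    by (intro sum.cong) (auto simp: field_simps R)
  finally show ?thesis .
qed

definition hardy_coeff :: "nat \<Rightarrow> nat \<Rightarrow> real" where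
  "hardy_coeff k m = (if m = k then real k / 2 else 1 / 2)"

lemma hardy_coeff_div_minus_sq:
  fixes N :: nat
  assumes "1 \<le> k" "k \<le> N" "xs 0 \<noteq> 0"
  shows "(\<Sum>q<N. hardy_field_deriv {k..N} (hardy_coeff k) xs q)
       - (\<Sum>q<N. (hardy_field {k..N} (hardy_coeff k) xs q)^2)
     = (real k)^2 / 4 * (1 / prefix_norm2 xs k) + (\<Sum>m=k+1..N. 1/4 * (1 / prefix_norm2 xs m))"
proof -
  let ?c = "hardy_coeff k"
  let ?term = "\<lambda>m. ?c m / prefix_norm2 xs m * (real m - ?c m - 2 * (\<Sum>l\<in>{l\<in>{k..N}. l < m}. ?c l))"
  have "(\<Sum>l\<in>{l\<in>{k..N}. l < m}. ?c l) = real m / 2 - 1 / 2" if "m \<in> {k+1..N}" for m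
  proof -
    have "{l\<in>{k..N}. l < m} = insert k {k+1..<m}" using that by auto
    then show ?thesis using that by (simp add: hardy_coeff_def of_nat_diff field_simps)
  qed
  then have tail: "(\<Sum>m\<in>{k+1..N}. ?term m) = (\<Sum>m=k+1..N. 1/4 * (1 / prefix_norm2 xs m))"
    by (intro sum.cong) (auto simp: hardy_coeff_def)
  have head: "?term k = (real k)^2 / 4 * (1 / prefix_norm2 xs k)"
  proof -
    have "{l\<in>{k..N}. l < k} = {}" by auto
    then show ?thesis by (simp only:) (simp add: hardy_coeff_def power2_eq_square)
  qed
  have "(\<Sum>q<N. hardy_field_deriv {k..N} ?c xs q) - (\<Sum>q<N. (hardy_field {k..N} ?c xs q)^2)
      = (\<Sum>m\<in>{k..N}. ?term m)"
    by (rule hardy_field_div_minus_sq) (use assms in auto)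
  also have "\<dots> = ?term k + (\<Sum>m\<in>{k+1..N}. ?term m)"
  proof -
    have "{k..N} = insert k {k+1..N}" using assms by auto
    then show ?thesis by (simp only:) (rule sum.insert, auto)
  qed
  finally show ?thesis unfolding head tail .
qed

lemma has_real_derivative_shifted_quotient:
  assumes "R \<noteq> 0"
  shows "((\<lambda>t. (a + t) / (R + b * (2 * t * a + t^2))) has_real_derivative 1 / R - b * 2 * a^2 / R^2) (at 0)"
  using assms by (auto intro!: derivative_eq_intros simp: field_simps power2_eq_square)

lemma hardy_field_has_real_derivative:
  assumes "0 \<notin> M" "xs 0 \<noteq> 0"
  shows "((\<lambda>t. hardy_field M c (\<lambda>p. xs p + t * of_bool (p = q)) q)
           has_real_derivative hardy_field_deriv M c xs q) (at 0)"
proof -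
  let ?R = "prefix_norm2 xs"
  have R: "?R m \<noteq> 0" if "m \<in> M" for m
    using prefix_norm2_pos[of xs m] assms that by (metis gr0I less_irrefl)
  have shifted: "(\<lambda>t. hardy_field M c (\<lambda>p. xs p + t * of_bool (p = q)) q)
      = (\<lambda>t. - (of_bool (q = 0) / (xs 0 + t * of_bool (q = 0)))
             + (\<Sum>m\<in>M. c m * of_bool (q < m)
                 * ((xs q + t) / (?R m + of_bool (q < m) * (2 * t * xs q + t^2)))))"
    by (auto simp: hardy_field_def prefix_norm2_shift intro!: sum.cong)
  have first: "((\<lambda>t. - (of_bool (q = 0) / (xs 0 + t * of_bool (q = 0))))
      has_real_derivative of_bool (q = 0) / (xs 0)^2) (at 0)"
    using assms(2) by (cases "q = 0") (auto intro!: derivative_eq_intros simp: power2_eq_square)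
  have rest: "((\<lambda>t. \<Sum>m\<in>M. c m * of_bool (q < m)
                 * ((xs q + t) / (?R m + of_bool (q < m) * (2 * t * xs q + t^2))))
      has_real_derivative (\<Sum>m\<in>M. c m * of_bool (q < m)
          * (1 / ?R m - 2 * (xs q)^2 / (?R m)^2))) (at 0)"
  proof (rule DERIV_sum)
    fix m assume "m \<in> M"
    show "((\<lambda>t. c m * of_bool (q < m) * ((xs q + t) / (?R m + of_bool (q < m) * (2 * t * xs q + t^2))))
        has_real_derivative c m * of_bool (q < m) * (1 / ?R m - 2 * (xs q)^2 / (?R m)^2)) (at 0)"
      using DERIV_cmult[OF has_real_derivative_shifted_quotient[OF R[OF \<open>m \<in> M\<close>]], of "c m * of_bool (q < m)" "xs q" "of_bool (q < m)"]
      by (cases "q < m") auto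
  qed
  show ?thesis
    unfolding shifted hardy_field_deriv_def by (rule DERIV_add[OF first rest])
qed

definition coord_index :: "nat \<Rightarrow> 'n::{finite,linorder}" where
  "coord_index q = sorted_list_of_set UNIV ! q"

text \<open>Padding with 0 beyond CARD('n) makes a step along the q-th axis change exactly the q-th
  entry of the sequence.\<close>

definition coord_seq :: "real ^ 'n::{finite,linorder} \<Rightarrow> nat \<Rightarrow> real" where
  "coord_seq x p = (if p < CARD('n) then x $ coord_index p else 0)"

lemma bij_betw_coord_index: "bij_betw coord_index {..<CARD('n::{finite,linorder})} (UNIV :: 'n set)"
  unfolding coord_index_def[abs_def] by (rule bij_betw_nth) auto

lemma coord_eq_coord_index: "coord x m = x $ coord_index (m - 1)"
  unfolding coord_def coord_index_def ..

lemma sum_coord_sq: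
  fixes x :: "real ^ 'n::{finite,linorder}"
  shows "m \<le> CARD('n) \<Longrightarrow> (\<Sum>j=1..m. (coord x j)^2) = prefix_norm2 (coord_seq x) m"
  unfolding prefix_norm2_def coord_eq_coord_index coord_seq_def by (induct m) auto

lemma coord_seq_add_axis:
  fixes x :: "real ^ 'n::{finite,linorder}"
  assumes "q < CARD('n)"
  shows "coord_seq (x + t *\<^sub>R axis (coord_index q) 1) = (\<lambda>p. coord_seq x p + t * of_bool (p = q))"
  using assms bij_betw_coord_index[where 'n='n]
  by (auto simp: coord_seq_def axis_def fun_eq_iff bij_betw_def inj_on_def)

lemma coord_seq_differentiable:
  "(\<lambda>x :: real ^ 'n::{finite,linorder}. coord_seq x p) differentiable (at x)"
  unfolding coord_seq_def
  by (cases "p < CARD('n)") (simp_all add: bounded_linear_imp_differentiable[OF bounded_linear_vec_nth])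

lemma half_space_eq: "half_space = {x. 0 < coord_seq x 0}"
  unfolding half_space_def coord_eq_coord_index coord_seq_def by simp

lemma open_half_space: "open half_space"
  unfolding half_space_def coord_eq_coord_index
  by (rule open_Collect_less) (auto intro!: continuous_intros)

definition half_space_field :: "nat \<Rightarrow> 'n \<Rightarrow> real ^ 'n::{finite,linorder} \<Rightarrow> real" where
  "half_space_field k i x = hardy_field {k..CARD('n)} (hardy_coeff k) (coord_seq x)
                              (the_inv_into {..<CARD('n)} coord_index i)"

lemma half_space_field_coord_index:
  "q < CARD('n::{finite,linorder}) \<Longrightarrow>
     half_space_field k (coord_index q :: 'n) x = hardy_field {k..CARD('n)} (hardy_coeff k) (coord_seq x) q"
  unfolding half_space_field_def
  using the_inv_into_f_f[OF bij_betw_imp_inj_on[OF bij_betw_coord_index[where 'n='n]]] by simp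

lemma prefix_norm2_coord_seq_pos:
  "x \<in> half_space \<Longrightarrow> 0 < m \<Longrightarrow> prefix_norm2 (coord_seq x) m > 0"
  by (rule prefix_norm2_pos) (auto simp: half_space_eq)

lemma half_space_field_differentiable:
  fixes x :: "real ^ 'n::{finite,linorder}"
  assumes "1 \<le> k" "x \<in> half_space"
  shows "half_space_field k i differentiable (at x)"
proof -
  have "(\<Sum>p<m. (coord_seq x p)^2) \<noteq> 0" if "m \<in> {k..CARD('n)}" for m
    using prefix_norm2_coord_seq_pos[OF assms(2), of m] that assms(1) by (simp add: prefix_norm2_def)
  moreover have "coord_seq x 0 \<noteq> 0" using assms(2) by (simp add: half_space_eq)
  ultimately show ?thesis
    unfolding half_space_field_def hardy_field_def prefix_norm2_def
    by (auto intro!: derivative_intros coord_seq_differentiable)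
qed

lemma partial_half_space_field:
  fixes x :: "real ^ 'n::{finite,linorder}"
  assumes "1 \<le> k" "x \<in> half_space" "q < CARD('n)"
  shows "partial (coord_index q) (half_space_field k (coord_index q)) x
           = hardy_field_deriv {k..CARD('n)} (hardy_coeff k) (coord_seq x) q"
proof (rule partial_eqI[OF half_space_field_differentiable[OF assms(1,2)]])
  show "((\<lambda>t. half_space_field k (coord_index q) (x + t *\<^sub>R axis (coord_index q) 1))
      has_real_derivative hardy_field_deriv {k..CARD('n)} (hardy_coeff k) (coord_seq x) q) (at 0)"
    unfolding half_space_field_coord_index[OF assms(3)] coord_seq_add_axis[OF assms(3)]
    by (rule hardy_field_has_real_derivative) (use assms in \<open>auto simp: half_space_eq\<close>)
qed

lemma continuous_on_partial_half_space_field: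
  fixes i :: "'n::{finite,linorder}"
  assumes "1 \<le> k"
  shows "continuous_on half_space (partial i (half_space_field k i))"
proof -
  obtain q where q: "q < CARD('n)" "i = coord_index q"
    using bij_betw_coord_index[where 'n='n] by (metis UNIV_I bij_betw_iff_bijections lessThan_iff)
  have coord_seq_cont: "continuous_on S (\<lambda>x. coord_seq x p)" for S and p
    using coord_seq_differentiable
    by (auto intro!: continuous_at_imp_continuous_on differentiable_imp_continuous_within)
  have "continuous_on half_space
      (\<lambda>x. hardy_field_deriv {k..CARD('n)} (hardy_coeff k) (coord_seq x) q)"
  proof -
    have nz: "(\<Sum>p<m. (coord_seq x p)^2) \<noteq> 0" if "k \<le> m" "x \<in> half_space" for m x
      using prefix_norm2_coord_seq_pos[OF that(2), of m] that(1) assms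
      by (simp add: prefix_norm2_def)
    have "\<forall>x\<in>half_space. coord_seq x 0 \<noteq> 0" by (simp add: half_space_eq)
    then show ?thesis
      unfolding hardy_field_deriv_def prefix_norm2_def
      by (auto intro!: continuous_intros coord_seq_cont) (use nz in blast)+
  qed
  then show ?thesis
    using partial_half_space_field[OF assms _ q(1)] q(2) by (simp cong: continuous_on_cong)
qed

lemma half_space_field_weight:
  fixes x :: "real ^ 'n::{finite,linorder}"
  assumes "1 \<le> k" "k \<le> CARD('n)" "x \<in> half_space"
  shows "divergence (half_space_field k) x - (\<Sum>i\<in>UNIV. (half_space_field k i x)^2)
     = (real k)^2 / 4 * (1 / (\<Sum>j=1..k. (coord x j)^2))
       + (\<Sum>m=k+1..CARD('n). 1/4 * (1 / (\<Sum>j=1..m. (coord x j)^2)))"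
proof -
  let ?N = "CARD('n)"
  have reindex: "(\<Sum>i\<in>UNIV. f i) = (\<Sum>q<?N. f (coord_index q))" for f :: "'n \<Rightarrow> real"
    using sum.reindex_bij_betw[OF bij_betw_coord_index, of f] by simp
  have "divergence (half_space_field k) x - (\<Sum>i\<in>UNIV. (half_space_field k i x)^2)
      = (\<Sum>q<?N. hardy_field_deriv {k..?N} (hardy_coeff k) (coord_seq x) q)
        - (\<Sum>q<?N. (hardy_field {k..?N} (hardy_coeff k) (coord_seq x) q)^2)"
    unfolding divergence_def reindex
    using partial_half_space_field[OF assms(1,3)] half_space_field_coord_index[where 'n='n]
    by (intro arg_cong2[where f="(-)"] sum.cong) simp_all
  also have "\<dots> = (real k)^2 / 4 * (1 / prefix_norm2 (coord_seq x) k)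
      + (\<Sum>m=k+1..?N. 1/4 * (1 / prefix_norm2 (coord_seq x) m))"
    using assms by (intro hardy_coeff_div_minus_sq) (auto simp: half_space_eq)
  also have "\<dots> = (real k)^2 / 4 * (1 / (\<Sum>j=1..k. (coord x j)^2))
      + (\<Sum>m=k+1..?N. 1/4 * (1 / (\<Sum>j=1..m. (coord x j)^2)))"
    using assms(2) sum_coord_sq[of _ x] by (auto intro!: sum.cong)
  finally show ?thesis .
qed

theorem corollary2p2:
  fixes u :: "real ^ ('n::{finite,linorder}) \<Rightarrow> real" and k :: nat
  assumes "1 \<le> k" and "k \<le> CARD('n)"
    and "u \<in> C0_infty half_space"
  shows "integral half_space (\<lambda>x. grad_sq u x)
    \<ge> integral half_space (\<lambda>x.
         ((real k)^2 / 4 * (1 / (\<Sum>j=1..k. (coord x j)^2))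
          + (\<Sum>m=k+1..CARD('n). 1/4 * (1 / (\<Sum>j=1..m. (coord x j)^2)))) * (u x)^2)"
proof -
  have "integral half_space (\<lambda>x.
         ((real k)^2 / 4 * (1 / (\<Sum>j=1..k. (coord x j)^2))
          + (\<Sum>m=k+1..CARD('n). 1/4 * (1 / (\<Sum>j=1..m. (coord x j)^2)))) * (u x)^2)
      = integral half_space (\<lambda>x. (divergence (half_space_field k) x
                                   - (\<Sum>i\<in>UNIV. (half_space_field k i x)^2)) * (u x)^2)"
    using half_space_field_weight[OF assms(1,2)] by (intro integral_cong) simp
  also have "\<dots> \<le> integral half_space (grad_sq u)"
    using half_space_field_differentiable[OF assms(1)] continuous_on_partial_half_space_field[OF assms(1)]
    by (intro grad_sq_integral_ge_vector_field[OF open_half_space assms(3)])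
  finally show ?thesis by simp
qed

end
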